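(* Let $k\ge1$, $G=(V,E)$ an inductively $k$-independent graph with $k$-independence ordering $v_1,\dots,v_n$, $f:2^V\to\mathbb{R}_{\ge0}$ submodular with $f(\emptyset)=0$, $\beta>0$ and $p\in(0,1)$. Run algorithm PD-RAND (described in the context). For each $i$, let $S_i$ be the (random) stack just before $v_i$ is processed, $B_i=N(v_i)\cap\{v_1,\dots,v_{i-1}\}$, $B_i'=B_i\cup\{v_i\}$, and $w(X)=\sum_{v_j\in X}w_j$. Then \[ \mathbb{E}\big[f_{S_i}(v_i)\,\mathbf{1}_{v_i\notin S_{\mathrm{end}}}\big]\le \max\Big\{\frac{1-p}{p},\,1+\beta\Big\}\,\mathbb{E}\big[w(B_i'\cap S_{\mathrm{end}})\big]. \]
   Context: $N(v)$ is the neighbourhood of $v$ (excluding $v$); $G$ is inductively $k$-independent with $k$-independence ordering $v_1,\dots,v_n$ if for every $i$, $G[N(v_i)\cap\{v_i,\dots,v_n\}]$ has no independent set of size more than $k$. For $S\subseteq V$, $f_S(v)=f(S\cup\{v\})-f(S)$. Algorithm PD-RAND (parameters $\beta>0$, $p\in(0,1)$). Phase 1: start with $S=\emptyset$ (a stack) and $w_1=\dots=w_n=0$. For $i=1,\dots,n$: let $C_i=N(v_i)\cap S$ for the current $S$; if $f_S(v_i)>(1+\beta)\sum_{v_j\in C_i}w_j$, then with probability $p$ (independently of all else) set $w_i=f_S(v_i)-\sum_{v_j\in C_i}w_j$ (with $S$ the set before insertion) and push $v_i$ onto $S$; in all other cases leave $w_i=0$ and do not add $v_i$. Let $S_{\mathrm{end}}$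 be $S$ at the end of Phase 1. Phase 2: with $S_{\mathrm{out}}=\emptyset$, pop vertices of $S_{\mathrm{end}}$ in reverse insertion order, adding a popped $v$ to $S_{\mathrm{out}}$ whenever $S_{\mathrm{out}}\cup\{v\}$ is independent. Output $S_{\mathrm{out}}$. *)

theory Defs
  imports "HOL-Probability.Probability"
begin

text \<open>Vertices are 0,...,n-1; the k-independence ordering v_1,...,v_n is the index order.
  The graph is given by a symmetric irreflexive adjacency relation E.\<close>

definition nbhd :: "(nat \<Rightarrow> nat \<Rightarrow> bool) \<Rightarrow> nat \<Rightarrow> nat \<Rightarrow> nat set" where
  "nbhd E n v = {u. u < n \<and> E v u}"

definition indep_set :: "(nat \<Rightarrow> nat \<Rightarrow> bool) \<Rightarrow> nat set \<Rightarrow> bool" where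
  "indep_set E I \<longleftrightarrow> (\<forall>x\<in>I. \<forall>y\<in>I. \<not> E x y)"

definition simple_graph :: "(nat \<Rightarrow> nat \<Rightarrow> bool) \<Rightarrow> bool" where
  "simple_graph E \<longleftrightarrow> (\<forall>x y. E x y \<longrightarrow> E y x) \<and> (\<forall>x. \<not> E x x)"

definition inductively_k_independent :: "(nat \<Rightarrow> nat \<Rightarrow> bool) \<Rightarrow> nat \<Rightarrow> nat \<Rightarrow> bool" where
  "inductively_k_independent E n k \<longleftrightarrow>
     (\<forall>i<n. \<forall>I. I \<subseteq> nbhd E n i \<inter> {i..<n} \<and> indep_set E I \<longrightarrow> card I \<le> k)"

definition submodular_on :: "nat set \<Rightarrow> (nat set \<Rightarrow> real) \<Rightarrow> bool" where
  "submodular_on V f \<longleftrightarrow>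
     (\<forall>A B. A \<subseteq> V \<longrightarrow> B \<subseteq> V \<longrightarrow> f (A \<union> B) + f (A \<inter> B) \<le> f A + f B)"

definition marg :: "(nat set \<Rightarrow> real) \<Rightarrow> nat set \<Rightarrow> nat \<Rightarrow> real" where
  "marg f S v = f (S \<union> {v}) - f S"

type_synonym state = "nat set \<times> (nat \<Rightarrow> real)"

text \<open>One step of Phase 1 of PD-RAND on vertex v_i: state = (stack contents S as a set, weights w).\<close>
definition pd_step :: "(nat \<Rightarrow> nat \<Rightarrow> bool) \<Rightarrow> (nat set \<Rightarrow> real) \<Rightarrow> real \<Rightarrow> real \<Rightarrow> nat \<Rightarrow> state \<Rightarrow> state pmf" where
  "pd_step E f \<beta> p i st =
     (let S = fst st; w = snd st; C = {j \<in> S. E i j}; g = marg f S i in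
      if g > (1 + \<beta>) * sum w C then
        map_pmf (\<lambda>b. if b then (S \<union> {i}, w(i := g - sum w C)) else (S, w)) (bernoulli_pmf p)
      else return_pmf (S, w))"

text \<open>Distribution of the history [state_0, ..., state_i] of Phase 1 after processing
  v_1..v_i; state_i is the state just before v_{i+1} (index i) is processed.\<close>
fun pd_hist :: "(nat \<Rightarrow> nat \<Rightarrow> bool) \<Rightarrow> (nat set \<Rightarrow> real) \<Rightarrow> real \<Rightarrow> real \<Rightarrow> nat \<Rightarrow> state list pmf" where
  "pd_hist E f \<beta> p 0 = return_pmf [({}, (\<lambda>_. 0))]"
| "pd_hist E f \<beta> p (Suc i) =
     pd_hist E f \<beta> p i \<bind> (\<lambda>h. map_pmf (\<lambda>s. h @ [s]) (pd_step E f \<beta> p i (last h)))"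

end

theory Submission
  imports Defs
begin

(* Whether v_i ends up in S_end, and the weights of B_i' \<inter> S_end, are already decided
   by step i: later steps push only vertices of larger index and never change an existing
   weight. It therefore suffices to compare the two sides over the single coin of step i,
   for every state (S, w) reachable before it. Let g = f_S(v_i) and W = w(C_i). If v_i is
   rejected outright (g \<le> (1 + \<beta>) W), the left side is g and the right side is at least
   (1 + \<beta>) W. Otherwise the left side is (1 - p) g and the right side is
   max((1 - p)/p, 1 + \<beta>) (p g + (1 - p) W) \<ge> (1 - p) g: pushing v_i sets w_i = g - W, so
   the weights of B_i' \<inter> S then sum to exactly g. *)

lemma integral_bind_pmf_finite:
  fixes F :: "'b \<Rightarrow> real"
  assumes fin_A: "finite (set_pmf A)" and fin_K: "\<And>x. x \<in> set_pmf A \<Longrightarrow> finite (set_pmf (K x))"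
  shows "measure_pmf.expectation (A \<bind> K) F =
         measure_pmf.expectation A (\<lambda>x. measure_pmf.expectation (K x) F)"
proof -
  define T where "T = (\<Union>x\<in>set_pmf A. set_pmf (K x))"
  have fin_T: "finite T"
    using fin_A fin_K by (auto simp: T_def)
  have expectation_K: "measure_pmf.expectation (K x) F = (\<Sum>y\<in>T. pmf (K x) y * F y)"
    if "x \<in> set_pmf A" for x
    using that by (subst integral_measure_pmf[OF fin_T]) (auto simp: T_def)
  have pmf_bind_sum: "pmf (A \<bind> K) y = (\<Sum>x\<in>set_pmf A. pmf A x * pmf (K x) y)" for y
    by (simp add: pmf_bind integral_measure_pmf[OF fin_A])
  have "measure_pmf.expectation (A \<bind> K) F = (\<Sum>y\<in>T. pmf (A \<bind> K) y * F y)"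
    by (subst integral_measure_pmf[OF fin_T]) (auto simp: T_def)
  also have "\<dots> = (\<Sum>x\<in>set_pmf A. pmf A x * (\<Sum>y\<in>T. pmf (K x) y * F y))"
    by (simp add: pmf_bind_sum sum_distrib_left sum_distrib_right mult.assoc sum.swap[of _ T])
  also have "\<dots> = (\<Sum>x\<in>set_pmf A. pmf A x * measure_pmf.expectation (K x) F)"
    by (simp add: expectation_K)
  also have "\<dots> = measure_pmf.expectation A (\<lambda>x. measure_pmf.expectation (K x) F)"
    by (subst integral_measure_pmf[OF fin_A]) auto
  finally show ?thesis .
qed

lemma pd_step_cases:
  assumes "s' \<in> set_pmf (pd_step E f \<beta> p i (S, w))"
  obtains "s' = (S, w)"
  | "marg f S i > (1 + \<beta>) * sum w {j \<in> S. E i j}"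
    "s' = (S \<union> {i}, w(i := marg f S i - sum w {j \<in> S. E i j}))"
  using assms unfolding pd_step_def Let_def by (auto split: if_splits)

lemma finite_set_pmf_pd_step: "finite (set_pmf (pd_step E f \<beta> p i s))"
  unfolding pd_step_def Let_def by auto

lemma finite_set_pmf_pd_hist: "finite (set_pmf (pd_hist E f \<beta> p m))"
  by (induction m) (auto intro!: finite_set_pmf_pd_step)

lemma length_pd_hist: "h \<in> set_pmf (pd_hist E f \<beta> p m) \<Longrightarrow> length h = Suc m"
  by (induction m arbitrary: h) auto

lemma last_pd_hist: "h \<in> set_pmf (pd_hist E f \<beta> p m) \<Longrightarrow> last h = h ! m"
  by (metis diff_Suc_1 last_conv_nth length_pd_hist list.size(3) nat.distinct(1))

text \<open>The weight \<open>marg f S i - w(C)\<close> of a pushed vertex exceeds \<open>\<beta> w(C) \<ge> 0\<close>.\<close>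
lemma pd_step_weights_nonneg:
  assumes "s' \<in> set_pmf (pd_step E f \<beta> p i s)" and "\<forall>j. snd s j \<ge> 0" and "\<beta> \<ge> 0"
  shows "snd s' j \<ge> 0"
proof -
  obtain S w where s: "s = (S, w)"
    by fastforce
  have "0 \<le> \<beta> * sum w {j \<in> S. E i j}"
    using assms(2,3) s by (simp add: sum_nonneg)
  from assms(1) have "s' \<in> set_pmf (pd_step E f \<beta> p i (S, w))"
    by (simp add: s)
  then show ?thesis
  proof (cases rule: pd_step_cases)
    case 1
    then show ?thesis
      using assms(2) s by simp
  next
    case 2
    then show ?thesis
      using assms(2) s \<open>0 \<le> \<beta> * sum w {j \<in> S. E i j}\<close> by (auto simp: algebra_simps)
  qed
qed

lemma pd_hist_weights_nonneg:
  "h \<in> set_pmf (pd_hist E f \<beta> p m) \<Longrightarrow> \<beta> \<ge> 0 \<Longrightarrow> snd (last h) j \<ge> 0"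
  by (induction m arbitrary: h j) (auto dest: pd_step_weights_nonneg)

definition grows_within :: "nat set \<Rightarrow> state \<Rightarrow> state \<Rightarrow> bool" where
  "grows_within A s s' \<longleftrightarrow>
     fst s \<subseteq> fst s' \<and> fst s' \<subseteq> fst s \<union> A \<and> (\<forall>j. j \<notin> A \<longrightarrow> snd s' j = snd s j)"

lemma grows_within_refl: "grows_within {} s s"
  by (simp add: grows_within_def)

lemma grows_within_trans:
  "grows_within A s s' \<Longrightarrow> grows_within B s' s'' \<Longrightarrow> grows_within (A \<union> B) s s''"
  by (auto simp: grows_within_def)

lemma grows_within_pd_step:
  "s' \<in> set_pmf (pd_step E f \<beta> p i s) \<Longrightarrow> grows_within {i} s s'"
  by (cases s) (auto simp: grows_within_def elim: pd_step_cases)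

lemma pd_hist_stack_subset: "h \<in> set_pmf (pd_hist E f \<beta> p m) \<Longrightarrow> fst (last h) \<subseteq> {..<m}"
  by (induction m arbitrary: h) (fastforce dest!: grows_within_pd_step simp: grows_within_def)+

lemma pd_hist_grows_within:
  assumes "h \<in> set_pmf (pd_hist E f \<beta> p m)" and "a \<le> b" and "b \<le> m"
  shows "grows_within {a..<b} (h ! a) (h ! b)"
  using assms
proof (induction m arbitrary: h b)
  case 0
  then show ?case
    by (simp add: grows_within_refl)
next
  case (Suc m)
  then obtain h' s where h: "h = h' @ [s]" and h': "h' \<in> set_pmf (pd_hist E f \<beta> p m)"
    and s: "s \<in> set_pmf (pd_step E f \<beta> p m (last h'))"
    by auto
  have len: "length h' = Suc m"
    using h' by (rule length_pd_hist)
  have nth_h: "h ! j = h' ! j" if "j \<le> m" for j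
    using that len by (simp add: h nth_append)
  consider "b \<le> m" | "a = Suc m" "b = Suc m" | "a \<le> m" "b = Suc m"
    using Suc.prems by linarith
  then show ?case
  proof cases
    case 1
    then show ?thesis
      using Suc.IH[OF h' Suc.prems(2)] Suc.prems(2) by (simp add: nth_h)
  next
    case 2
    then show ?thesis
      by (simp add: grows_within_refl)
  next
    case 3
    have "grows_within {m} (h' ! m) s"
      using grows_within_pd_step[OF s] by (simp add: last_pd_hist[OF h'])
    then have "grows_within ({a..<m} \<union> {m}) (h' ! a) s"
      by (rule grows_within_trans[OF Suc.IH[OF h' \<open>a \<le> m\<close> order_refl]])
    moreover have "{a..<m} \<union> {m} = {a..<Suc m}"
      using \<open>a \<le> m\<close> by auto
    ultimately show ?thesis
      using 3 len by (simp add: h nth_h nth_append)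
  qed
qed

lemma map_pmf_take_pd_hist:
  "map_pmf (take (Suc m)) (pd_hist E f \<beta> p (m + d)) = pd_hist E f \<beta> p m"
proof (induction d)
  case 0
  have "map_pmf (take (Suc m)) (pd_hist E f \<beta> p m) = map_pmf id (pd_hist E f \<beta> p m)"
    by (rule map_pmf_cong) (auto dest: length_pd_hist)
  then show ?case
    by simp
next
  case (Suc d)
  have "map_pmf (take (Suc m)) (pd_hist E f \<beta> p (m + Suc d))
      = pd_hist E f \<beta> p (m + d) \<bind> (\<lambda>h. return_pmf (take (Suc m) h))"
    by (auto simp: map_bind_pmf map_pmf_comp dest: length_pd_hist intro!: bind_pmf_cong)
  then show ?case
    using Suc.IH by (simp add: map_pmf_def)
qed

lemma expectation_pd_hist_consecutive:
  fixes G :: "state \<Rightarrow> state \<Rightarrow> real"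
  assumes "i < n"
  shows "measure_pmf.expectation (pd_hist E f \<beta> p n) (\<lambda>h. G (h ! i) (h ! Suc i)) =
    measure_pmf.expectation (pd_hist E f \<beta> p i)
      (\<lambda>h. measure_pmf.expectation (pd_step E f \<beta> p i (last h)) (G (last h)))"
proof -
  have "pd_hist E f \<beta> p (Suc i) = map_pmf (take (Suc (Suc i))) (pd_hist E f \<beta> p n)"
    using map_pmf_take_pd_hist[of "Suc i" E f \<beta> p "n - Suc i"] assms by simp
  then have "measure_pmf.expectation (pd_hist E f \<beta> p n) (\<lambda>h. G (h ! i) (h ! Suc i)) =
      measure_pmf.expectation (pd_hist E f \<beta> p (Suc i)) (\<lambda>h. G (h ! i) (h ! Suc i))"
    by simp
  also have "\<dots> = measure_pmf.expectation (pd_hist E f \<beta> p i)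
      (\<lambda>h. measure_pmf.expectation (pd_step E f \<beta> p i (last h)) (\<lambda>s. G ((h @ [s]) ! i) ((h @ [s]) ! Suc i)))"
    by (simp add: integral_bind_pmf_finite finite_set_pmf_pd_hist finite_set_pmf_pd_step)
  also have "\<dots> = measure_pmf.expectation (pd_hist E f \<beta> p i)
      (\<lambda>h. measure_pmf.expectation (pd_step E f \<beta> p i (last h)) (G (last h)))"
    by (intro integral_cong_AE)
       (auto simp: AE_measure_pmf_iff nth_append last_pd_hist length_pd_hist)
  finally show ?thesis .
qed

lemma pd_step_charging:
  assumes "i \<notin> S" and "finite S" and "\<forall>j. w j \<ge> 0"
    and X: "X \<inter> insert i S = insert i {j \<in> S. E i j}"
    and "\<beta> > 0" and "0 < p" and "p < 1"
  shows "measure_pmf.expectation (pd_step E f \<beta> p i (S, w))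
           (\<lambda>s. marg f S i * (if i \<notin> fst s then 1 else 0))
         \<le> max ((1 - p) / p) (1 + \<beta>) *
           measure_pmf.expectation (pd_step E f \<beta> p i (S, w)) (\<lambda>s. sum (snd s) (X \<inter> fst s))"
proof -
  define c where "c = max ((1 - p) / p) (1 + \<beta>)"
  define C where "C = {j \<in> S. E i j}"
  define W where "W = sum w C"
  define g where "g = marg f S i"
  have "W \<ge> 0"
    using assms(3) by (simp add: W_def sum_nonneg)
  have X_S: "X \<inter> S = C"
    using X \<open>i \<notin> S\<close> by (auto simp: C_def)
  show ?thesis
  proof (cases "g > (1 + \<beta>) * W")
    case True
    have "g \<ge> 0"
      using True \<open>W \<ge> 0\<close> \<open>\<beta> > 0\<close> by (smt (verit) mult_nonneg_nonneg)
    have "sum (w(i := g - W)) C = W"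
      using \<open>i \<notin> S\<close> by (auto simp: W_def C_def intro!: sum.cong)
    then have "sum (w(i := g - W)) (insert i C) = g"
      using \<open>finite S\<close> \<open>i \<notin> S\<close> by (simp add: C_def)
    then have expectations:
        "measure_pmf.expectation (pd_step E f \<beta> p i (S, w)) (\<lambda>s. g * (if i \<notin> fst s then 1 else 0))
           = g * (1 - p)"
        "measure_pmf.expectation (pd_step E f \<beta> p i (S, w)) (\<lambda>s. sum (snd s) (X \<inter> fst s))
           = g * p + W * (1 - p)"
      using True \<open>i \<notin> S\<close> \<open>0 < p\<close> \<open>p < 1\<close>
      by (simp_all add: pd_step_def Let_def X_S X[folded C_def] flip: C_def W_def g_def)
    have "c * p \<ge> (1 - p) / p * p"
      unfolding c_def using \<open>0 < p\<close> by (intro mult_right_mono) auto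
    then have "c * p \<ge> 1 - p"
      using \<open>0 < p\<close> by simp
    then have "g * (1 - p) \<le> c * (g * p)"
      using \<open>g \<ge> 0\<close> by (metis mult.assoc mult.commute mult_left_mono)
    moreover have "0 \<le> c * (W * (1 - p))"
      using \<open>W \<ge> 0\<close> \<open>p < 1\<close> \<open>\<beta> > 0\<close> by (simp add: c_def)
    ultimately show ?thesis
      unfolding g_def[symmetric] c_def[symmetric] expectations by (simp add: algebra_simps)
  next
    case False
    then have "pd_step E f \<beta> p i (S, w) = return_pmf (S, w)"
      by (simp add: pd_step_def Let_def C_def W_def g_def)
    moreover have "g \<le> c * W"
      using False \<open>W \<ge> 0\<close> by (smt (verit) c_def max.cobounded2 mult_right_mono)
    ultimately show ?thesis
      using \<open>i \<notin> S\<close> by (simp add: X_S c_def W_def g_def)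
  qed
qed

lemma pd_hist_decided_at_step:
  assumes "h \<in> set_pmf (pd_hist E f \<beta> p n)" and "i < n"
  shows "i \<in> fst (h ! n) \<longleftrightarrow> i \<in> fst (h ! Suc i)"
    and "X \<subseteq> {..<Suc i} \<Longrightarrow>
      sum (snd (h ! n)) (X \<inter> fst (h ! n)) = sum (snd (h ! Suc i)) (X \<inter> fst (h ! Suc i))"
proof -
  have grows: "grows_within {Suc i..<n} (h ! Suc i) (h ! n)"
    using pd_hist_grows_within[OF assms(1)] \<open>i < n\<close> by simp
  then show "i \<in> fst (h ! n) \<longleftrightarrow> i \<in> fst (h ! Suc i)"
    by (auto simp: grows_within_def)
  assume "X \<subseteq> {..<Suc i}"
  with grows have "X \<inter> fst (h ! n) = X \<inter> fst (h ! Suc i)"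
    and "\<forall>j \<in> X. snd (h ! n) j = snd (h ! Suc i) j"
    by (auto simp: grows_within_def subset_iff) (meson leD)
  then show "sum (snd (h ! n)) (X \<inter> fst (h ! n)) = sum (snd (h ! Suc i)) (X \<inter> fst (h ! Suc i))"
    by simp
qed

lemma pd_hist_step_charging:
  assumes h: "h \<in> set_pmf (pd_hist E f \<beta> p i)" and "i < n"
    and "\<beta> > 0" and "0 < p" and "p < 1"
  shows "measure_pmf.expectation (pd_step E f \<beta> p i (last h))
           (\<lambda>s. marg f (fst (last h)) i * (if i \<notin> fst s then 1 else 0))
         \<le> max ((1 - p) / p) (1 + \<beta>) *
           measure_pmf.expectation (pd_step E f \<beta> p i (last h))
           (\<lambda>s. sum (snd s) ((nbhd E n i \<inter> {..<i} \<union> {i}) \<inter> fst s))"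
proof -
  obtain S w where last: "last h = (S, w)"
    by fastforce
  have "S \<subseteq> {..<i}"
    using pd_hist_stack_subset[OF h] last by simp
  then have "finite S" and "i \<notin> S"
    and "(nbhd E n i \<inter> {..<i} \<union> {i}) \<inter> insert i S = insert i {j \<in> S. E i j}"
    using \<open>i < n\<close> finite_subset by (auto simp: nbhd_def)
  moreover have "\<forall>j. w j \<ge> 0"
    using pd_hist_weights_nonneg[OF h] \<open>\<beta> > 0\<close> last by (metis less_imp_le snd_conv)
  ultimately show ?thesis
    using pd_step_charging \<open>\<beta> > 0\<close> \<open>0 < p\<close> \<open>p < 1\<close> by (simp add: last)
qed

theorem lemma8:
  fixes E :: "nat \<Rightarrow> nat \<Rightarrow> bool" and n k i :: nat and f :: "nat set \<Rightarrow> real"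
    and \<beta> p :: real
  assumes "k \<ge> 1"
    and "simple_graph E"
    and "inductively_k_independent E n k"
    and "submodular_on {..<n} f"
    and "\<forall>A \<subseteq> {..<n}. f A \<ge> 0"
    and "f {} = 0"
    and "\<beta> > 0" and "0 < p" and "p < 1"
    and "i < n"
  shows "measure_pmf.expectation (pd_hist E f \<beta> p n)
           (\<lambda>h. marg f (fst (h ! i)) i * (if i \<notin> fst (h ! n) then 1 else 0))
         \<le> max ((1 - p) / p) (1 + \<beta>) *
           measure_pmf.expectation (pd_hist E f \<beta> p n)
           (\<lambda>h. sum (snd (h ! n)) ((nbhd E n i \<inter> {..<i} \<union> {i}) \<inter> fst (h ! n)))"
proof -
  let ?E = "measure_pmf.expectation"
  let ?c = "max ((1 - p) / p) (1 + \<beta>)"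
  let ?X = "nbhd E n i \<inter> {..<i} \<union> {i}"
  let ?loss = "\<lambda>s s'. marg f (fst s) i * (if i \<notin> fst s' then 1 else 0)"
  let ?charge = "\<lambda>s s'. sum (snd s') (?X \<inter> fst s')"
  let ?step = "\<lambda>h. pd_step E f \<beta> p i (last h)"
  have X: "?X \<subseteq> {..<Suc i}"
    by auto
  have "?E (pd_hist E f \<beta> p n) (\<lambda>h. ?loss (h ! i) (h ! n))
      = ?E (pd_hist E f \<beta> p n) (\<lambda>h. ?loss (h ! i) (h ! Suc i))"
    by (intro integral_cong_AE)
       (auto simp: AE_measure_pmf_iff pd_hist_decided_at_step(1)[OF _ \<open>i < n\<close>])
  also have "\<dots> = ?E (pd_hist E f \<beta> p i) (\<lambda>h. ?E (?step h) (?loss (last h)))"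
    by (rule expectation_pd_hist_consecutive[OF \<open>i < n\<close>])
  also have "\<dots> \<le> ?E (pd_hist E f \<beta> p i) (\<lambda>h. ?c * ?E (?step h) (?charge (last h)))"
    using pd_hist_step_charging[OF _ \<open>i < n\<close> \<open>\<beta> > 0\<close> \<open>0 < p\<close> \<open>p < 1\<close>]
    by (intro integral_mono_AE)
       (auto simp: AE_measure_pmf_iff intro!: integrable_measure_pmf_finite finite_set_pmf_pd_hist)
  also have "\<dots> = ?c * ?E (pd_hist E f \<beta> p n) (\<lambda>h. ?charge (h ! i) (h ! Suc i))"
    using expectation_pd_hist_consecutive[OF \<open>i < n\<close>, where G = ?charge]
    by (simp only: integral_mult_right_zero)
  also have "\<dots> = ?c * ?E (pd_hist E f \<beta> p n) (\<lambda>h. ?charge (h ! n) (h ! n))"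
    by (intro arg_cong[where f = "(*) ?c"] integral_cong_AE)
       (simp_all add: AE_measure_pmf_iff pd_hist_decided_at_step(2)[OF _ \<open>i < n\<close> X]
         del: Un_insert_right)
  finally show ?thesis .
qed

end
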